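(* Let $\mathfrak g$ be of type $B_n$ and $J\subseteq I$. Then for $s\ge1$, $\mathbf A_{s,J}=\mathbf A^{1,1}_{s,J}\sqcup\mathbf A^{1,2}_{s,J}\sqcup\mathbf A^{2}_{s,J}$ where $$\mathbf A^{1,1}_{s,J}=\{\{\beta_{i_k,j_k}\}_{1\le k\le s}\in\mathbf A^1_s:\ i_k,j_k\notin J\ \forall k\},$$ $$\mathbf A^{1,2}_{s,J}=\{\{\beta_{i_k,j_k}\}_{1\le k\le s}\in\mathbf A^1_s:\ \{\beta_{i_k,j_k}\}_{1\le k\le s-1}\in\mathbf A^{1,1}_{s-1,J},\ i_s\in J,\ j_s=i_s+1\notin J\},$$ and, if $1\notin J$, $$\mathbf A^{2}_{s,J}=\{\{\alpha_{1,\ell}\}\cup\{\beta_{i_k,j_k}\}_{1\le k\le s-1}\in\mathbf A^2_s:\ \ell\notin J,\ \{\beta_{i_k,j_k}\}_{1\le k\le s-1}\in\mathbf A^{1,1}_{s-1,J}\sqcup\mathbf A^{1,2}_{s-1,J}\},$$ while $\mathbf A^2_{s,J}=\emptyset$ if $1\in J$.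
   Context: Simple roots $\alpha_1,\dots,\alpha_n$ of $B_n$ numbered as in Bourbaki, $I=\{1,\dots,n\}$; $\alpha_{i,j}=\alpha_i+\dots+\alpha_j$ ($i\le j$), $\beta_{k,\ell}=\alpha_{k,n}+\alpha_{\ell,n}$ ($k<\ell$), $\theta=\beta_{1,2}$. $\mathbf A^1_s=\{\{\beta_{i_k,j_k}\}_{1\le k\le s}: i_1<\dots<i_s<j_s<\dots<j_1\}$ and $\mathbf A^2_s=\{\{\alpha_{1,\ell}\}\cup\{\beta_{i_k,j_k}\}_{1\le k\le s-1}: \{\beta_{i_k,j_k}\}\in\mathbf A^1_{s-1},\ i_1>1,\ j_1\le\ell\}$; these together are all abelian antichains with $s$ elements. For $\eta=\sum_i d_i(\eta)\alpha_i$, $R^+(J)=\{\alpha\in R^+:d_i(\alpha)=0\ \forall i\notin J\}$. A $J$-antichain is a subset $A\subseteq R^+$ with $A\cap R^+(J)=\emptyset$, distinct elements pairwise incomparable (order: $\lambda\le\mu$ iff $\mu-\lambda$ is a nonnegative integer combination of simple roots), and $\alpha-\alpha_j\notin R$ for $\alpha\in A$, $j\in J$. $\Phi(A)=\{\alpha\in R^+:\alpha\ge\beta$ for some $\beta\in A\}$; $A$ is abelian if $\beta_1+\beta_2\notin R$ for all $\beta_1,\beta_2\in\Phi(A)$. $\mathbf A_{s,J}$ is the set of abelian $J$-antichains with $s$ elements; for $s=0$ the sets $\mathbf A^{1,1}_{0,J}$ consist of the empty antichain and $\mathbf A^{1,2}_{0,J}=\emptyset$. *)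

theory Defs
  imports Main "HOL-Library.Function_Algebras"
begin

text \<open>Root system of type B_n, n >= 2, simple roots alpha_1..alpha_n (Bourbaki numbering).
  A weight eta = sum d_i(eta) alpha_i is represented by its coefficient function
  nat => int (coefficients supported on {1..n}).\<close>

definition alpha :: "nat \<Rightarrow> nat \<Rightarrow> nat \<Rightarrow> int" where
  "alpha i j = (\<lambda>t. if i \<le> t \<and> t \<le> j then 1 else 0)"

definition beta :: "nat \<Rightarrow> nat \<Rightarrow> nat \<Rightarrow> nat \<Rightarrow> int" where
  "beta n k l = alpha k n + alpha l n"

definition posroots :: "nat \<Rightarrow> (nat \<Rightarrow> int) set" where
  "posroots n = {alpha i j | i j. 1 \<le> i \<and> i \<le> j \<and> j \<le> n}
              \<union> {beta n k l | k l. 1 \<le> k \<and> k < l \<and> l \<le> n}"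

definition roots :: "nat \<Rightarrow> (nat \<Rightarrow> int) set" where
  "roots n = posroots n \<union> uminus ` posroots n"

definition rle :: "(nat \<Rightarrow> int) \<Rightarrow> (nat \<Rightarrow> int) \<Rightarrow> bool" where
  "rle a b = (\<forall>t. a t \<le> b t)"

definition posroots_J :: "nat \<Rightarrow> nat set \<Rightarrow> (nat \<Rightarrow> int) set" where
  "posroots_J n J = {a \<in> posroots n. \<forall>i\<in>{1..n}. i \<notin> J \<longrightarrow> a i = 0}"

definition J_antichain :: "nat \<Rightarrow> nat set \<Rightarrow> (nat \<Rightarrow> int) set \<Rightarrow> bool" where
  "J_antichain n J A \<longleftrightarrow> A \<subseteq> posroots n \<and> A \<inter> posroots_J n J = {}
     \<and> (\<forall>a\<in>A. \<forall>b\<in>A. a \<noteq> b \<longrightarrow> \<not> rle a b)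
     \<and> (\<forall>a\<in>A. \<forall>j\<in>J. a - alpha j j \<notin> roots n)"

definition upper :: "nat \<Rightarrow> (nat \<Rightarrow> int) set \<Rightarrow> (nat \<Rightarrow> int) set" where
  "upper n A = {a \<in> posroots n. \<exists>b\<in>A. rle b a}"

definition abelian :: "nat \<Rightarrow> (nat \<Rightarrow> int) set \<Rightarrow> bool" where
  "abelian n A \<longleftrightarrow> (\<forall>b1\<in>upper n A. \<forall>b2\<in>upper n A. b1 + b2 \<notin> roots n)"

definition Aab :: "nat \<Rightarrow> nat \<Rightarrow> nat set \<Rightarrow> (nat \<Rightarrow> int) set set" where
  "Aab n s J = {A. J_antichain n J A \<and> abelian n A \<and> finite A \<and> card A = s}"

definition chain :: "nat \<Rightarrow> nat \<Rightarrow> (nat \<Rightarrow> nat) \<Rightarrow> (nat \<Rightarrow> nat) \<Rightarrow> bool" where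
  "chain n s i j \<longleftrightarrow> (\<forall>k\<in>{1..s}. 1 \<le> i k \<and> i k < j k \<and> j k \<le> n)
     \<and> (\<forall>k. 1 \<le> k \<and> k < s \<longrightarrow> i k < i (Suc k) \<and> j (Suc k) < j k)"

definition bset :: "nat \<Rightarrow> nat \<Rightarrow> (nat \<Rightarrow> nat) \<Rightarrow> (nat \<Rightarrow> nat) \<Rightarrow> (nat \<Rightarrow> int) set" where
  "bset n s i j = (\<lambda>k. beta n (i k) (j k)) ` {1..s}"

definition A1 :: "nat \<Rightarrow> nat \<Rightarrow> (nat \<Rightarrow> int) set set" where
  "A1 n s = {bset n s i j | i j. chain n s i j}"

definition A2 :: "nat \<Rightarrow> nat \<Rightarrow> (nat \<Rightarrow> int) set set" where
  "A2 n s = {insert (alpha 1 l) (bset n (s - 1) i j) | l i j.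
       1 \<le> s \<and> 1 \<le> l \<and> l \<le> n \<and> chain n (s - 1) i j
       \<and> (1 \<le> s - 1 \<longrightarrow> 1 < i 1 \<and> j 1 \<le> l)}"

definition A11 :: "nat \<Rightarrow> nat \<Rightarrow> nat set \<Rightarrow> (nat \<Rightarrow> int) set set" where
  "A11 n s J = {bset n s i j | i j. chain n s i j \<and> (\<forall>k\<in>{1..s}. i k \<notin> J \<and> j k \<notin> J)}"

text \<open>By convention A12 for s = 0 is empty.\<close>
definition A12 :: "nat \<Rightarrow> nat \<Rightarrow> nat set \<Rightarrow> (nat \<Rightarrow> int) set set" where
  "A12 n s J = {bset n s i j | i j. 1 \<le> s \<and> chain n s i j
       \<and> bset n (s - 1) i j \<in> A11 n (s - 1) J
       \<and> i s \<in> J \<and> j s = i s + 1 \<and> j s \<notin> J}"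

definition A2J :: "nat \<Rightarrow> nat \<Rightarrow> nat set \<Rightarrow> (nat \<Rightarrow> int) set set" where
  "A2J n s J = (if 1 \<in> J then {} else
     {insert (alpha 1 l) (bset n (s - 1) i j) | l i j.
       1 \<le> s \<and> 1 \<le> l \<and> l \<le> n \<and> chain n (s - 1) i j
       \<and> (1 \<le> s - 1 \<longrightarrow> 1 < i 1 \<and> j 1 \<le> l)
       \<and> l \<notin> J \<and> bset n (s - 1) i j \<in> A11 n (s - 1) J \<union> A12 n (s - 1) J})"

end

theory Submission
  imports Defs
begin

(* Roots are coefficient functions, so every claim about roots reduces to evaluating
   coefficients: each root has coefficients in [-2, 2] and alpha_1-coefficient <= 1.
   The key local fact is that beta_{k,l} - alpha_t is a root for some t in J unless
   the pair (k,l) is "admissible" (l not in J, and k in J only if l = k + 1), and that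
   alpha_{1,l} - alpha_t avoids the roots exactly when 1, l are not in J.

   Containment of the three classes in A_{s,J}: a chain of admissible pairs gives pairwise
   incomparable betas, all with alpha_n-coefficient 2, hence an abelian J-antichain; adding
   alpha_{1,l} around a chain nested in [2, l] keeps these properties.  For chains, lying in
   A^{1,1} or A^{1,2} is the same as having only admissible pairs.

   Converse: the betas of an antichain are strictly nested, hence enumerate a chain of
   admissible pairs; by abelianity any other root is alpha_{1,l}, unique by incomparability,
   and encloses the chain.  Disjointness compares first indices (A^{1,1} vs A^{1,2}) and
   alpha versus beta roots (A^1 vs A^2). *)

lemma alpha_apply: "alpha i j t = (if i \<le> t \<and> t \<le> j then 1 else 0)"
  by (simp add: alpha_def)

lemma beta_apply:
  "beta n k l t = (if k \<le> t \<and> t \<le> n then 1 else 0) + (if l \<le> t \<and> t \<le> n then 1 else 0)"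
  by (simp add: beta_def alpha_def)

lemma posroots_cases:
  assumes "x \<in> posroots n"
  obtains (alpha) i j where "1 \<le> i" "i \<le> j" "j \<le> n" "x = alpha i j"
        | (beta) k l where "1 \<le> k" "k < l" "l \<le> n" "x = beta n k l"
  using assms unfolding posroots_def by blast

lemma alpha_posroot: "1 \<le> i \<Longrightarrow> i \<le> j \<Longrightarrow> j \<le> n \<Longrightarrow> alpha i j \<in> posroots n"
  unfolding posroots_def by blast

lemma beta_posroot: "1 \<le> k \<Longrightarrow> k < l \<Longrightarrow> l \<le> n \<Longrightarrow> beta n k l \<in> posroots n"
  unfolding posroots_def by blast

lemma posroot_root: "x \<in> posroots n \<Longrightarrow> x \<in> roots n"
  unfolding roots_def by blast

lemma posroot_coeff_bounds: "x \<in> posroots n \<Longrightarrow> 0 \<le> x t \<and> x t \<le> 2 \<and> x 1 \<le> 1"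
  by (erule posroots_cases) (auto simp: alpha_apply beta_apply)

lemma root_coeff_bounds:
  assumes "x \<in> roots n" shows "x t \<le> 2" and "x 1 \<le> 1"
proof -
  obtain y where "y \<in> posroots n" and "x = y \<or> x = - y"
    using assms unfolding roots_def by blast
  then show "x t \<le> 2" and "x 1 \<le> 1"
    using posroot_coeff_bounds[of y n t] posroot_coeff_bounds[of y n 1] by auto
qed

lemma root_pos_coeff_posroot:
  assumes "x \<in> roots n" and "0 < x t" shows "x \<in> posroots n"
proof -
  obtain y where "y \<in> posroots n" and "x = y \<or> x = - y"
    using assms(1) unfolding roots_def by blast
  then show ?thesis using assms(2) posroot_coeff_bounds[of y n t] by auto
qed

text \<open>\<open>\<beta>\<^sub>k\<^sub>,\<^sub>l\<close> determines the pair \<open>(k,l)\<close>, and no \<open>\<alpha>\<^sub>i\<^sub>,\<^sub>j\<close> is a \<open>\<beta>\<close> (their \<open>\<alpha>\<^sub>n\<close>-coefficients differ).\<close>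
lemma beta_inj:
  assumes "1 \<le> k" "k < l" "l \<le> n" "1 \<le> k'" "k' < l'" "l' \<le> n"
    and eq: "beta n k l = beta n k' l'"
  shows "k = k' \<and> l = l'"
proof -
  have "beta n k l k = beta n k' l' k" "beta n k l k' = beta n k' l' k'"
       "beta n k l l = beta n k' l' l" "beta n k l l' = beta n k' l' l'"
    using eq by auto
  then show ?thesis using assms(1-6) by (auto simp: beta_apply split: if_splits)
qed

lemma alpha_ne_beta: "j \<le> n \<Longrightarrow> k < l \<Longrightarrow> l \<le> n \<Longrightarrow> alpha i j \<noteq> beta n k l"
proof
  assume "j \<le> n" "k < l" "l \<le> n" "alpha i j = beta n k l"
  then have "alpha i j n = beta n k l n" by simp
  with \<open>j \<le> n\<close> \<open>k < l\<close> \<open>l \<le> n\<close> show False by (auto simp: alpha_apply beta_apply split: if_splits)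
qed

lemma rle_apply: "rle a b \<Longrightarrow> a t \<le> b t"
  by (simp add: rle_def)

lemma alpha_rle_iff:
  assumes "i \<le> j" "i' \<le> j'"
  shows "rle (alpha i j) (alpha i' j') \<longleftrightarrow> i' \<le> i \<and> j \<le> j'"
proof
  assume "rle (alpha i j) (alpha i' j')"
  then have "alpha i j i \<le> alpha i' j' i" "alpha i j j \<le> alpha i' j' j"
    by (simp_all add: rle_apply)
  with assms show "i' \<le> i \<and> j \<le> j'" by (simp add: alpha_apply split: if_splits)
qed (auto simp: rle_def alpha_apply)

lemma beta_rle_iff:
  assumes "k < l" "l \<le> n" "k' < l'" "l' \<le> n"
  shows "rle (beta n k' l') (beta n k l) \<longleftrightarrow> k \<le> k' \<and> l \<le> l'"
proof
  assume "rle (beta n k' l') (beta n k l)"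
  then have "beta n k' l' k' \<le> beta n k l k'" "beta n k' l' l' \<le> beta n k l l'"
    by (simp_all add: rle_apply)
  with assms show "k \<le> k' \<and> l \<le> l'" by (simp add: beta_apply split: if_splits)
qed (auto simp: rle_def beta_apply)

lemma alpha_1_rle_beta_1: "l \<le> n \<Longrightarrow> rle (alpha 1 l) (beta n 1 m)"
  by (auto simp: rle_def alpha_apply beta_apply)

definition admissible :: "nat set \<Rightarrow> nat \<Rightarrow> nat \<Rightarrow> bool" where
  "admissible J k l \<longleftrightarrow> l \<notin> J \<and> (k \<in> J \<longrightarrow> l = Suc k)"

lemma beta_minus_simple_not_root:
  assumes k: "1 \<le> k" "k < l" "l \<le> n"
    and t: "1 \<le> t" "t \<le> n" "t \<noteq> l" "t = k \<longrightarrow> l = Suc k"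
  shows "beta n k l - alpha t t \<notin> roots n"
proof
  let ?v = "beta n k l - alpha t t"
  assume "?v \<in> roots n"
  moreover have "0 < ?v n" using k t by (auto simp: alpha_apply beta_apply)
  ultimately have "?v \<in> posroots n" by (rule root_pos_coeff_posroot)
  then show False
  proof (cases rule: posroots_cases)
    case (alpha a b)
    then have "?v n = alpha a b n" "?v l = alpha a b l" by auto
    with k t alpha(1-3) show False by (simp add: alpha_apply beta_apply split: if_splits)
  next
    case (beta a b)
    then have "?v t = beta n a b t" "?v k = beta n a b k" "?v l = beta n a b l"
      "?v (Suc k) = beta n a b (Suc k)" by auto
    with k t beta(1-3) show False by (auto simp: alpha_apply beta_apply split: if_splits)
  qed
qed

lemma beta_minus_simple_root_right:
  assumes "1 \<le> k" "k < l" "l \<le> n"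
  shows "beta n k l - alpha l l \<in> roots n"
proof (cases "l < n")
  case True
  then have "beta n k l - alpha l l = beta n k (Suc l)"
    using assms by (auto simp: fun_eq_iff alpha_apply beta_apply)
  then show ?thesis using assms True beta_posroot[of k "Suc l" n] posroot_root by auto
next
  case False
  then have "beta n k l - alpha l l = alpha k n"
    using assms by (auto simp: fun_eq_iff alpha_apply beta_apply)
  then show ?thesis using assms alpha_posroot[of k n n] posroot_root by auto
qed

lemma beta_minus_simple_root_left:
  assumes "1 \<le> k" "Suc k < l" "l \<le> n"
  shows "beta n k l - alpha k k \<in> roots n"
proof -
  have "beta n k l - alpha k k = beta n (Suc k) l"
    using assms by (auto simp: fun_eq_iff alpha_apply beta_apply)
  then show ?thesis using assms beta_posroot[of "Suc k" l n] posroot_root by auto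
qed

lemma beta_lowest_iff_admissible:
  assumes J: "J \<subseteq> {1..n}" and kl: "1 \<le> k" "k < l" "l \<le> n"
  shows "(\<forall>t\<in>J. beta n k l - alpha t t \<notin> roots n) \<longleftrightarrow> admissible J k l"
proof
  assume low: "\<forall>t\<in>J. beta n k l - alpha t t \<notin> roots n"
  have "l \<notin> J" using low beta_minus_simple_root_right[OF kl] by blast
  moreover have "l = Suc k" if "k \<in> J"
  proof (rule ccontr)
    assume "l \<noteq> Suc k"
    with kl have "Suc k < l" by simp
    with low that beta_minus_simple_root_left[OF kl(1) _ kl(3)] show False by blast
  qed
  ultimately show "admissible J k l" by (simp add: admissible_def)
next
  assume "admissible J k l"
  then show "\<forall>t\<in>J. beta n k l - alpha t t \<notin> roots n"
    using J kl by (intro ballI beta_minus_simple_not_root) (auto simp: admissible_def)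
qed

lemma alpha_1_minus_simple_not_root:
  assumes l: "1 \<le> l" "l \<le> n" and t: "1 < t" "t \<le> n" "t \<noteq> l"
  shows "alpha 1 l - alpha t t \<notin> roots n"
proof
  let ?v = "alpha 1 l - alpha t t"
  assume "?v \<in> roots n"
  moreover have "0 < ?v 1" using l t by (auto simp: alpha_apply)
  ultimately have pos: "?v \<in> posroots n" by (rule root_pos_coeff_posroot)
  then have "0 \<le> ?v t" using posroot_coeff_bounds by blast
  from pos show False
  proof (cases rule: posroots_cases)
    case (alpha a b)
    then have "?v t = alpha a b t" "?v 1 = alpha a b 1" "?v l = alpha a b l" by auto
    with l t alpha(1-3) \<open>0 \<le> ?v t\<close> show False by (auto simp: alpha_apply split: if_splits)
  next
    case (beta a b)
    then have "?v t = beta n a b t" "?v 1 = beta n a b 1" "?v l = beta n a b l" by auto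
    with l t beta(1-3) \<open>0 \<le> ?v t\<close> show False
      by (auto simp: alpha_apply beta_apply split: if_splits)
  qed
qed

lemma alpha_1_minus_simple_root:
  assumes "1 < l" "l \<le> n" "t = 1 \<or> t = l"
  shows "alpha 1 l - alpha t t \<in> roots n"
  using assms(3)
proof
  assume "t = 1"
  then have "alpha 1 l - alpha t t = alpha 2 l"
    using assms by (auto simp: fun_eq_iff alpha_apply)
  then show ?thesis using assms alpha_posroot[of 2 l n] posroot_root by auto
next
  assume "t = l"
  then have "alpha 1 l - alpha t t = alpha 1 (l - 1)"
    using assms by (auto simp: fun_eq_iff alpha_apply)
  then show ?thesis using assms alpha_posroot[of 1 "l - 1" n] posroot_root by auto
qed

lemma alpha_1_lowest_iff:
  assumes J: "J \<subseteq> {1..n}" and l: "1 \<le> l" "l \<le> n"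
  shows "(alpha 1 l \<notin> posroots_J n J \<and> (\<forall>t\<in>J. alpha 1 l - alpha t t \<notin> roots n))
    \<longleftrightarrow> 1 \<notin> J \<and> l \<notin> J"
proof
  assume low: "alpha 1 l \<notin> posroots_J n J \<and> (\<forall>t\<in>J. alpha 1 l - alpha t t \<notin> roots n)"
  show "1 \<notin> J \<and> l \<notin> J"
  proof (cases "l = 1")
    case True
    have "alpha 1 1 \<in> posroots_J n J" if "1 \<in> J"
      using that l by (auto simp: posroots_J_def alpha_posroot alpha_apply)
    with low True show ?thesis by blast
  next
    case False
    with low alpha_1_minus_simple_root[of l n] l show ?thesis by auto
  qed
next
  assume notJ: "1 \<notin> J \<and> l \<notin> J"
  have "alpha 1 l l \<noteq> 0" using l by (simp add: alpha_apply)
  then have "alpha 1 l \<notin> posroots_J n J" using notJ l by (auto simp: posroots_J_def)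
  moreover have "alpha 1 l - alpha t t \<notin> roots n" if "t \<in> J" for t
  proof (rule alpha_1_minus_simple_not_root[OF l])
    have "t \<in> {1..n}" "t \<noteq> 1" "t \<noteq> l" using that J notJ by auto
    then show "1 < t" "t \<le> n" "t \<noteq> l" by auto
  qed
  ultimately show "alpha 1 l \<notin> posroots_J n J \<and> (\<forall>t\<in>J. alpha 1 l - alpha t t \<notin> roots n)"
    by blast
qed

lemma beta_not_posroots_J:
  assumes "1 \<le> l" "k < l" "l \<le> n" "l \<notin> J"
  shows "beta n k l \<notin> posroots_J n J"
proof -
  have "beta n k l l \<noteq> 0" using assms by (simp add: beta_apply)
  then show ?thesis using assms by (auto simp: posroots_J_def)
qed

lemma alpha_1_plus_alpha_root: "1 < i \<Longrightarrow> i \<le> n \<Longrightarrow> alpha 1 n + alpha i n \<in> roots n"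
proof -
  assume a: "1 < i" "i \<le> n"
  then have "alpha 1 n + alpha i n = beta n 1 i"
    by (auto simp: fun_eq_iff alpha_apply beta_apply)
  then show ?thesis using a beta_posroot[of 1 i n] posroot_root by auto
qed

lemma alpha_1_plus_beta_root:
  assumes "2 \<le> l" "l < n"
  shows "alpha 1 l + beta n 2 (Suc l) \<in> roots n"
proof -
  have "alpha 1 l + beta n 2 (Suc l) = beta n 1 2"
    using assms by (auto simp: fun_eq_iff alpha_apply beta_apply)
  then show ?thesis using assms beta_posroot[of 1 2 n] posroot_root by auto
qed

lemma alpha_1_1_plus_beta_root:
  assumes "2 < m" "m \<le> n"
  shows "alpha 1 1 + beta n 2 m \<in> roots n"
proof -
  have "alpha 1 1 + beta n 2 m = beta n 1 m"
    using assms by (auto simp: fun_eq_iff alpha_apply beta_apply)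
  then show ?thesis using assms beta_posroot[of 1 m n] posroot_root by auto
qed

text \<open>Any set of roots all of whose elements have \<open>\<alpha>\<^sub>n\<close>-coefficient \<open>2\<close> is abelian:
  two roots above it would sum to a weight with \<open>\<alpha>\<^sub>n\<close>-coefficient at least \<open>4\<close>.\<close>
lemma abelian_if_coeff_n_2:
  assumes "\<forall>b\<in>A. b n = 2" shows "abelian n A"
  unfolding abelian_def
proof (intro ballI)
  have n2: "2 \<le> x n" if x: "x \<in> upper n A" for x
  proof -
    obtain a where "a \<in> A" "rle a x" using x unfolding upper_def by blast
    then show ?thesis using assms rle_apply[of a x n] by simp
  qed
  fix x y assume "x \<in> upper n A" "y \<in> upper n A"
  then have "2 \<le> x n" "2 \<le> y n" using n2 by blast+
  then have "\<not> (x + y) n \<le> 2" by simp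
  then show "x + y \<notin> roots n" using root_coeff_bounds(1) by blast
qed

text \<open>A set \<open>{\<alpha>\<^sub>1\<^sub>,\<^sub>l} \<union> B\<close>, where every root of \<open>B\<close> is some \<open>\<beta>\<^sub>k\<^sub>,\<^sub>m\<close> with \<open>m \<le> l\<close>, is
  abelian: a root above \<open>\<alpha>\<^sub>1\<^sub>,\<^sub>l\<close> has all coefficients \<open>1..l\<close> positive, a root above
  \<open>\<beta>\<^sub>k\<^sub>,\<^sub>m\<close> has coefficients \<open>\<ge> 2\<close> at \<open>m\<close> and \<open>n\<close>; any sum of two such roots has a
  coefficient exceeding the bounds of \<open>root_coeff_bounds\<close>.\<close>
lemma abelian_alpha_1_betas:
  assumes l: "1 \<le> l" "l \<le> n" and B: "\<forall>b\<in>B. \<exists>k m. k < m \<and> m \<le> l \<and> b = beta n k m"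
  shows "abelian n (insert (alpha 1 l) B)"
  unfolding abelian_def
proof (intro ballI)
  let ?A = "insert (alpha 1 l) B"
  have above: "(\<forall>t. 1 \<le> t \<and> t \<le> l \<longrightarrow> 1 \<le> z t)
      \<or> (\<exists>m. 1 \<le> m \<and> m \<le> l \<and> 2 \<le> z m \<and> 2 \<le> z n)" if z: "z \<in> upper n ?A" for z
  proof -
    obtain b where b: "b \<in> ?A" "rle b z" using z unfolding upper_def by blast
    show ?thesis
    proof (cases "b = alpha 1 l")
      case True
      have "1 \<le> z t" if "1 \<le> t" "t \<le> l" for t
        using rle_apply[OF b(2), of t] True that by (simp add: alpha_apply)
      then show ?thesis by blast
    next
      case False
      then obtain k m where "k < m" "m \<le> l" "b = beta n k m" using b(1) B by blast
      moreover have "m \<le> n" using \<open>m \<le> l\<close> l by simp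
      ultimately show ?thesis using rle_apply[OF b(2), of m] rle_apply[OF b(2), of n]
        by (auto simp: beta_apply)
    qed
  qed
  fix x y assume x: "x \<in> upper n ?A" and y: "y \<in> upper n ?A"
  have "1 < (x + y) 1 \<or> (\<exists>t. 2 < (x + y) t)"
    using above[OF x] above[OF y]
  proof (elim disjE exE conjE)
    assume "\<forall>t. 1 \<le> t \<and> t \<le> l \<longrightarrow> 1 \<le> x t" "\<forall>t. 1 \<le> t \<and> t \<le> l \<longrightarrow> 1 \<le> y t"
    then have "1 \<le> x 1" "1 \<le> y 1" using l by auto
    then show ?thesis by simp
  next
    fix m assume "\<forall>t. 1 \<le> t \<and> t \<le> l \<longrightarrow> 1 \<le> x t" "1 \<le> m" "m \<le> l" "2 \<le> y m"
    then have "2 < (x + y) m" by force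
    then show ?thesis by blast
  next
    fix m assume "\<forall>t. 1 \<le> t \<and> t \<le> l \<longrightarrow> 1 \<le> y t" "1 \<le> m" "m \<le> l" "2 \<le> x m"
    then have "2 < (x + y) m" by force
    then show ?thesis by blast
  next
    fix m m' assume "2 \<le> x n" "2 \<le> y n"
    then have "2 < (x + y) n" by simp
    then show ?thesis by blast
  qed
  then show "x + y \<notin> roots n" using root_coeff_bounds by (meson not_le)
qed

lemma chain_elem: "chain n s i j \<Longrightarrow> m \<in> {1..s} \<Longrightarrow> 1 \<le> i m \<and> i m < j m \<and> j m \<le> n"
  unfolding chain_def by auto

lemma chain_prefix: "chain n s i j \<Longrightarrow> chain n (s - 1) i j"
  unfolding chain_def by auto

lemma chain_mono:
  assumes c: "chain n s i j" and m: "1 \<le> m" "m < m'" "m' \<le> s"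
  shows "i m < i m' \<and> j m' < j m"
  using m(2,3)
proof (induction m')
  case (Suc q)
  have step: "i q < i (Suc q) \<and> j (Suc q) < j q"
    using c Suc.prems m(1) unfolding chain_def by auto
  show ?case
  proof (cases "q = m")
    case False
    then have "i m < i q \<and> j q < j m" using Suc by auto
    then show ?thesis using step by auto
  qed (use step in simp)
qed simp

lemma chain_snoc:
  assumes c: "chain n s i j" and kl: "1 \<le> k" "k < l" "l \<le> n"
    and inside: "1 \<le> s \<Longrightarrow> i s < k \<and> l < j s"
  shows "chain n (Suc s) (i(Suc s := k)) (j(Suc s := l))"
proof -
  let ?i = "i(Suc s := k)" and ?j = "j(Suc s := l)"
  have "\<forall>m\<in>{1..Suc s}. 1 \<le> ?i m \<and> ?i m < ?j m \<and> ?j m \<le> n"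
  proof
    fix m assume "m \<in> {1..Suc s}"
    then show "1 \<le> ?i m \<and> ?i m < ?j m \<and> ?j m \<le> n"
      using kl chain_elem[OF c, of m] by (cases "m = Suc s") auto
  qed
  moreover have "\<forall>m. 1 \<le> m \<and> m < Suc s \<longrightarrow> ?i m < ?i (Suc m) \<and> ?j (Suc m) < ?j m"
  proof (intro allI impI)
    fix m assume "1 \<le> m \<and> m < Suc s"
    then show "?i m < ?i (Suc m) \<and> ?j (Suc m) < ?j m"
      using inside c unfolding chain_def by (cases "m = s") auto
  qed
  ultimately show ?thesis unfolding chain_def by (rule conjI)
qed

definition nested_pairs :: "nat \<Rightarrow> (nat \<times> nat) set \<Rightarrow> bool" where
  "nested_pairs n P \<longleftrightarrow> (\<forall>k l. (k, l) \<in> P \<longrightarrow> 1 \<le> k \<and> k < l \<and> l \<le> n)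
     \<and> (\<forall>k l k' l'. (k, l) \<in> P \<longrightarrow> (k', l') \<in> P \<longrightarrow> k < k' \<longrightarrow> l' < l)
     \<and> (\<forall>k l l'. (k, l) \<in> P \<longrightarrow> (k, l') \<in> P \<longrightarrow> l = l')"

lemma nested_pairs_subset: "nested_pairs n P \<Longrightarrow> Q \<subseteq> P \<Longrightarrow> nested_pairs n Q"
  unfolding nested_pairs_def by (meson subsetD)

lemma nested_pairs_chain:
  assumes "finite P" and "nested_pairs n P"
  shows "\<exists>i j. chain n (card P) i j \<and> (\<lambda>m. (i m, j m)) ` {1..card P} = P"
  using assms
proof (induction "card P" arbitrary: P)
  case 0
  then have "P = {}" by simp
  then show ?case unfolding chain_def by auto
next
  case (Suc s)
  have range: "1 \<le> k \<and> k < l \<and> l \<le> n" if "(k, l) \<in> P" for k l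
    using Suc.prems(2) that unfolding nested_pairs_def by blast
  have outer: "l' < l" if "(k, l) \<in> P" "(k', l') \<in> P" "k < k'" for k l k' l'
    using Suc.prems(2) that unfolding nested_pairs_def by blast
  have unique: "l = l'" if "(k, l) \<in> P" "(k, l') \<in> P" for k l l'
    using Suc.prems(2) that unfolding nested_pairs_def by blast
  define k0 where "k0 = Max (fst ` P)"
  have "P \<noteq> {}" using Suc.hyps(2) by auto
  then have "k0 \<in> fst ` P" unfolding k0_def using Suc.prems(1) by simp
  then obtain l0 where p0: "(k0, l0) \<in> P" by force
  have k0_max: "k \<le> k0" if "(k, l) \<in> P" for k l
    unfolding k0_def using Suc.prems(1) that by (metis Max_ge finite_imageI fst_conv image_eqI)
  let ?P' = "P - {(k0, l0)}"
  have card': "s = card ?P'" using Suc.hyps(2) Suc.prems(1) p0 by simp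
  moreover have "finite ?P'" using Suc.prems(1) by simp
  moreover have "nested_pairs n ?P'" using nested_pairs_subset[OF Suc.prems(2)] by blast
  ultimately obtain i j where c: "chain n s i j" and im: "(\<lambda>m. (i m, j m)) ` {1..s} = ?P'"
    using Suc.hyps(1) by blast
  have inside: "i s < k0 \<and> l0 < j s" if "1 \<le> s"
  proof -
    have "(i s, j s) \<in> ?P'" unfolding im[symmetric] using that by auto
    then have q: "(i s, j s) \<in> P" "(i s, j s) \<noteq> (k0, l0)" by auto
    have "i s \<noteq> k0"
    proof
      assume "i s = k0"
      then have "j s = l0" using unique[OF q(1)] p0 by simp
      with \<open>i s = k0\<close> q(2) show False by simp
    qed
    then have "i s < k0" using k0_max[OF q(1)] by simp
    moreover from this have "l0 < j s" using outer[OF q(1) p0] by simp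
    ultimately show ?thesis by simp
  qed
  have "chain n (Suc s) (i(Suc s := k0)) (j(Suc s := l0))"
    using chain_snoc[OF c _ _ _ inside] range[OF p0] by simp
  moreover have "(\<lambda>m. ((i(Suc s := k0)) m, (j(Suc s := l0)) m)) ` {1..Suc s} = P"
  proof -
    have "{1..Suc s} = insert (Suc s) {1..s}" by auto
    then have "(\<lambda>m. ((i(Suc s := k0)) m, (j(Suc s := l0)) m)) ` {1..Suc s}
        = insert (k0, l0) ((\<lambda>m. (i m, j m)) ` {1..s})" by auto
    then show ?thesis using im p0 by auto
  qed
  ultimately show ?case unfolding Suc.hyps(2)[symmetric] by (intro exI conjI)
qed

text \<open>Distinct chain positions give distinct roots, so \<open>bset n s i j\<close> has \<open>s\<close> elements.\<close>
lemma bset_card: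
  assumes c: "chain n s i j" shows "card (bset n s i j) = s"
proof -
  have "inj_on (\<lambda>m. beta n (i m) (j m)) {1..s}"
  proof (rule inj_onI)
    fix a b assume ab: "a \<in> {1..s}" "b \<in> {1..s}" "beta n (i a) (j a) = beta n (i b) (j b)"
    then have "i a = i b" using beta_inj chain_elem[OF c ab(1)] chain_elem[OF c ab(2)] by blast
    then show "a = b" using chain_mono[OF c, of a b] chain_mono[OF c, of b a] ab(1,2)
      by (cases a b rule: linorder_cases) auto
  qed
  then show ?thesis unfolding bset_def by (simp add: card_image)
qed

text \<open>A property of pairs that holds for (the pair of) every element of \<open>bset n s i j\<close>
  holds for each pair of the chain, as \<open>\<beta>\<close> determines its pair.\<close>
lemma chain_pairs_inherit:
  assumes c: "chain n s i j"
    and Q: "\<forall>x\<in>bset n s i j. \<exists>k l. 1 \<le> k \<and> k < l \<and> l \<le> n \<and> x = beta n k l \<and> Q k l"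
  shows "\<forall>m\<in>{1..s}. Q (i m) (j m)"
proof
  fix m assume m: "m \<in> {1..s}"
  then have "beta n (i m) (j m) \<in> bset n s i j" unfolding bset_def by auto
  then obtain k l where kl: "1 \<le> k" "k < l" "l \<le> n" "beta n (i m) (j m) = beta n k l" "Q k l"
    using Q by blast
  then have "i m = k \<and> j m = l" using beta_inj chain_elem[OF c m] by blast
  then show "Q (i m) (j m)" using kl by simp
qed

lemma bset_posroots: "chain n s i j \<Longrightarrow> bset n s i j \<subseteq> posroots n"
  unfolding bset_def using chain_elem beta_posroot by blast

lemma bset_incomparable:
  assumes c: "chain n s i j" and ab: "a \<in> bset n s i j" "b \<in> bset n s i j" "a \<noteq> b"
  shows "\<not> rle a b"
proof -
  obtain p q where pq: "p \<in> {1..s}" "q \<in> {1..s}" "a = beta n (i p) (j p)" "b = beta n (i q) (j q)"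
    using ab(1,2) unfolding bset_def by auto
  then have "p < q \<or> q < p" using ab(3) by auto
  then show ?thesis
    using chain_mono[OF c, of p q] chain_mono[OF c, of q p] pq
      chain_elem[OF c pq(1)] chain_elem[OF c pq(2)] beta_rle_iff[of "i q" "j q" n "i p" "j p"]
    by auto
qed

lemma bset_in_Aab:
  assumes c: "chain n s i j" and adm: "\<forall>m\<in>{1..s}. admissible J (i m) (j m)"
    and J: "J \<subseteq> {1..n}"
  shows "bset n s i j \<in> Aab n s J"
proof -
  let ?A = "bset n s i j"
  have "?A \<inter> posroots_J n J = {}"
    using chain_elem[OF c] adm beta_not_posroots_J unfolding bset_def admissible_def by fastforce
  moreover have "\<forall>a\<in>?A. \<forall>t\<in>J. a - alpha t t \<notin> roots n"
    using chain_elem[OF c] adm beta_lowest_iff_admissible[OF J] unfolding bset_def by fastforce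
  moreover have "abelian n ?A"
    using chain_elem[OF c] by (intro abelian_if_coeff_n_2) (force simp: bset_def beta_apply)
  ultimately show ?thesis
    using bset_posroots[OF c] bset_incomparable[OF c] bset_card[OF c]
    unfolding Aab_def J_antichain_def by (auto simp: bset_def)
qed

lemma alpha_bset_in_Aab:
  assumes c: "chain n s i j" and l: "1 \<le> l" "l \<le> n"
    and nest: "1 \<le> s \<longrightarrow> 1 < i 1 \<and> j 1 \<le> l"
    and notJ: "1 \<notin> J" "l \<notin> J"
    and adm: "\<forall>m\<in>{1..s}. admissible J (i m) (j m)" and J: "J \<subseteq> {1..n}"
  shows "insert (alpha 1 l) (bset n s i j) \<in> Aab n (Suc s) J"
proof -
  let ?B = "bset n s i j" and ?a = "alpha 1 l"
  have inner: "1 < i m \<and> i m < j m \<and> j m \<le> l" if m: "m \<in> {1..s}" for m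
    using nest chain_mono[OF c, of 1 m] chain_elem[OF c m] m by (cases "m = 1") auto
  have B: "?B \<in> Aab n s J" by (rule bset_in_Aab[OF c adm J])
  have a_notin: "?a \<notin> ?B"
    using alpha_ne_beta[of l n] chain_elem[OF c] l unfolding bset_def by fastforce
  have a_incomparable: "\<not> rle ?a b \<and> \<not> rle b ?a" if b: "b \<in> ?B" for b
  proof -
    obtain m where m: "m \<in> {1..s}" "b = beta n (i m) (j m)" using b unfolding bset_def by blast
    then have "b 1 < ?a 1" "?a n < b n" using inner[OF m(1)] l by (auto simp: alpha_apply beta_apply)
    then show ?thesis using rle_apply not_le by metis
  qed
  have "J_antichain n J (insert ?a ?B)"
    using B a_incomparable alpha_posroot[OF _ l] alpha_1_lowest_iff[OF J l] notJ l
    unfolding Aab_def J_antichain_def by auto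
  moreover have "abelian n (insert ?a ?B)"
    using l inner unfolding bset_def by (intro abelian_alpha_1_betas) force+
  ultimately show ?thesis
    using B a_notin unfolding Aab_def by simp
qed

lemma A11_elem:
  assumes "X \<in> A11 n s J" "x \<in> X"
  shows "\<exists>k l. 1 \<le> k \<and> k < l \<and> l \<le> n \<and> x = beta n k l \<and> k \<notin> J \<and> l \<notin> J"
  using assms unfolding A11_def bset_def chain_def by fastforce

lemma A11_A12_elem:
  assumes X: "X \<in> A11 n s J \<union> A12 n s J" and x: "x \<in> X"
  shows "\<exists>k l. 1 \<le> k \<and> k < l \<and> l \<le> n \<and> x = beta n k l \<and> admissible J k l"
proof (cases "X \<in> A11 n s J")
  case True
  then show ?thesis using A11_elem[OF _ x] by (fastforce simp: admissible_def)
next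
  case False
  then obtain i j where w: "X = bset n s i j" "chain n s i j" "bset n (s - 1) i j \<in> A11 n (s - 1) J"
    "j s = Suc (i s)" "j s \<notin> J"
    using X unfolding A12_def by auto
  then obtain m where m: "m \<in> {1..s}" "x = beta n (i m) (j m)" using x unfolding bset_def by auto
  show ?thesis
  proof (cases "m = s")
    case True
    then show ?thesis using m w chain_elem[OF w(2) m(1)] by (auto simp: admissible_def)
  next
    case False
    then have "x \<in> bset n (s - 1) i j" using m unfolding bset_def by auto
    then show ?thesis using A11_elem[OF w(3)] by (fastforce simp: admissible_def)
  qed
qed

text \<open>For a chain, being of type \<open>A\<^sup>1\<^sup>,\<^sup>1\<close> or \<open>A\<^sup>1\<^sup>,\<^sup>2\<close> means exactly that all its pairs
  are admissible: admissible pairs with first index in \<open>J\<close> are \<open>(k, k+1)\<close>, and by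
  nesting only the innermost pair can be of this form.\<close>
lemma bset_A11_A12_iff:
  assumes c: "chain n s i j"
  shows "bset n s i j \<in> A11 n s J \<union> A12 n s J \<longleftrightarrow> (\<forall>m\<in>{1..s}. admissible J (i m) (j m))"
proof
  assume "bset n s i j \<in> A11 n s J \<union> A12 n s J"
  then show "\<forall>m\<in>{1..s}. admissible J (i m) (j m)"
    using chain_pairs_inherit[OF c] A11_A12_elem by blast
next
  assume adm: "\<forall>m\<in>{1..s}. admissible J (i m) (j m)"
  show "bset n s i j \<in> A11 n s J \<union> A12 n s J"
  proof (cases "\<forall>m\<in>{1..s}. i m \<notin> J")
    case True
    then have "bset n s i j \<in> A11 n s J"
      using c adm unfolding A11_def admissible_def by blast
    then show ?thesis by simp
  next
    case False
    then obtain m where m: "m \<in> {1..s}" "i m \<in> J" by blast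
    have only_last: "q = s" if q: "q \<in> {1..s}" "i q \<in> J" for q
    proof (rule ccontr)
      assume "q \<noteq> s"
      then have "i q < i s \<and> j s < j q" using chain_mono[OF c, of q s] q(1) by auto
      moreover have "i s < j s" "j q = Suc (i q)"
        using chain_elem[OF c, of s] adm q by (auto simp: admissible_def)
      ultimately show False by simp
    qed
    have "\<forall>q\<in>{1..s - 1}. i q \<notin> J \<and> j q \<notin> J"
      using only_last adm by (fastforce simp: admissible_def)
    then have "bset n (s - 1) i j \<in> A11 n (s - 1) J"
      using chain_prefix[OF c] unfolding A11_def by blast
    moreover have "m = s" using only_last m by blast
    ultimately have "bset n s i j \<in> A12 n s J"
      using c m adm unfolding A12_def admissible_def by fastforce
    then show ?thesis by simp
  qed
qed

lemma A2J_cases: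
  assumes "X \<in> A2J n s J"
  obtains l i j where "1 \<notin> J" "X = insert (alpha 1 l) (bset n (s - 1) i j)" "1 \<le> s"
    "1 \<le> l" "l \<le> n" "chain n (s - 1) i j" "1 \<le> s - 1 \<longrightarrow> 1 < i 1 \<and> j 1 \<le> l" "l \<notin> J"
    "bset n (s - 1) i j \<in> A11 n (s - 1) J \<union> A12 n (s - 1) J"
  using assms unfolding A2J_def by (auto split: if_splits)

lemma classes_subset_Aab:
  assumes J: "J \<subseteq> {1..n}" and X: "X \<in> A11 n s J \<union> A12 n s J \<union> A2J n s J"
  shows "X \<in> Aab n s J"
proof (cases "X \<in> A2J n s J")
  case True
  then obtain l i j where w: "1 \<notin> J" "X = insert (alpha 1 l) (bset n (s - 1) i j)" "1 \<le> s"
    "1 \<le> l" "l \<le> n" "chain n (s - 1) i j" "1 \<le> s - 1 \<longrightarrow> 1 < i 1 \<and> j 1 \<le> l" "l \<notin> J"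
    "bset n (s - 1) i j \<in> A11 n (s - 1) J \<union> A12 n (s - 1) J"
    by (rule A2J_cases)
  have "\<forall>m\<in>{1..s - 1}. admissible J (i m) (j m)"
    using w(9) bset_A11_A12_iff[OF w(6)] by blast
  then have "X \<in> Aab n (Suc (s - 1)) J"
    unfolding w(2) by (rule alpha_bset_in_Aab[OF w(6) w(4,5,7,1,8) _ J])
  then show ?thesis using w(3) by simp
next
  case False
  then have X1: "X \<in> A11 n s J \<union> A12 n s J" using X by blast
  then obtain i j where w: "X = bset n s i j" "chain n s i j"
    unfolding A11_def A12_def by blast
  have "\<forall>m\<in>{1..s}. admissible J (i m) (j m)"
    using X1 bset_A11_A12_iff[OF w(2)] unfolding w(1) by blast
  then show ?thesis unfolding w(1) by (rule bset_in_Aab[OF w(2) _ J])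
qed

definition betaroots :: "nat \<Rightarrow> (nat \<Rightarrow> int) set" where
  "betaroots n = {beta n k l | k l. 1 \<le> k \<and> k < l \<and> l \<le> n}"

lemma antichain_betas_chain:
  assumes A: "J_antichain n J A" "finite A" and J: "J \<subseteq> {1..n}"
  obtains i j where "chain n (card (A \<inter> betaroots n)) i j"
    "bset n (card (A \<inter> betaroots n)) i j = A \<inter> betaroots n"
    "\<forall>m\<in>{1..card (A \<inter> betaroots n)}. admissible J (i m) (j m)"
proof -
  define P where "P = {(k,l). 1 \<le> k \<and> k < l \<and> l \<le> n \<and> beta n k l \<in> A}"
  have betas: "A \<inter> betaroots n = (\<lambda>(k,l). beta n k l) ` P"
    unfolding P_def betaroots_def by auto
  have inj: "inj_on (\<lambda>(k,l). beta n k l) P"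
  proof (rule inj_onI, clarify)
    fix k l k' l' assume "(k,l) \<in> P" "(k',l') \<in> P" "beta n k l = beta n k' l'"
    then show "k = k' \<and> l = l'" using beta_inj unfolding P_def by blast
  qed
  have "finite ((\<lambda>(k,l). beta n k l) ` P)" unfolding betas[symmetric] using A(2) by simp
  then have finP: "finite P" using finite_imageD inj by blast
  have card: "card (A \<inter> betaroots n) = card P"
    unfolding betas using card_image[OF inj] .
  have incomparable: "\<not> rle (beta n k' l') (beta n k l)"
    if p: "(k,l) \<in> P" "(k',l') \<in> P" "(k,l) \<noteq> (k',l')" for k l k' l'
  proof -
    have "beta n k' l' \<noteq> beta n k l" using p beta_inj[of k' l' n k l] unfolding P_def by auto
    then show ?thesis using p A(1) unfolding P_def J_antichain_def by blast
  qed
  have range: "\<forall>k l. (k, l) \<in> P \<longrightarrow> 1 \<le> k \<and> k < l \<and> l \<le> n"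
    unfolding P_def by simp
  have outer: "\<forall>k l k' l'. (k, l) \<in> P \<longrightarrow> (k', l') \<in> P \<longrightarrow> k < k' \<longrightarrow> l' < l"
  proof (intro allI impI)
    fix k l k' l' assume p: "(k, l) \<in> P" "(k', l') \<in> P" "k < k'"
    show "l' < l"
    proof (rule ccontr)
      assume "\<not> l' < l"
      then have "rle (beta n k' l') (beta n k l)" using beta_rle_iff p unfolding P_def by auto
      with incomparable[OF p(1,2)] p(3) show False by auto
    qed
  qed
  have unique: "\<forall>k l l'. (k, l) \<in> P \<longrightarrow> (k, l') \<in> P \<longrightarrow> l = l'"
  proof (intro allI impI)
    fix k l l' assume kl: "(k, l) \<in> P" "(k, l') \<in> P"
    show "l = l'"
      using incomparable[OF kl] incomparable[OF kl(2,1)] kl beta_rle_iff[of k]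
      unfolding P_def by (cases l l' rule: linorder_cases) auto
  qed
  have "nested_pairs n P"
    unfolding nested_pairs_def using range outer unique by (intro conjI)
  then have "\<exists>i j. chain n (card P) i j \<and> (\<lambda>m. (i m, j m)) ` {1..card P} = P"
    by (rule nested_pairs_chain[OF finP])
  then obtain i j where c: "chain n (card P) i j" and im: "(\<lambda>m. (i m, j m)) ` {1..card P} = P"
    by blast
  have "bset n (card P) i j = (\<lambda>(k,l). beta n k l) ` ((\<lambda>m. (i m, j m)) ` {1..card P})"
    unfolding bset_def image_image by simp
  also have "\<dots> = A \<inter> betaroots n" using im betas by simp
  finally have "bset n (card P) i j = A \<inter> betaroots n" .
  moreover have "admissible J (i m) (j m)" if "m \<in> {1..card P}" for m
  proof -
    have "(i m, j m) \<in> P" using im that by blast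
    then have "1 \<le> i m" "i m < j m" "j m \<le> n" "beta n (i m) (j m) \<in> A" unfolding P_def by auto
    then show ?thesis
      using A(1) beta_lowest_iff_admissible[OF J] unfolding J_antichain_def by blast
  qed
  ultimately show ?thesis using that c unfolding card by blast
qed

lemma upperI: "x \<in> posroots n \<Longrightarrow> b \<in> A \<Longrightarrow> rle b x \<Longrightarrow> x \<in> upper n A"
  unfolding upper_def by blast

text \<open>In an abelian set, every root that is not some \<open>\<beta>\<^sub>k\<^sub>,\<^sub>l\<close> is some \<open>\<alpha>\<^sub>1\<^sub>,\<^sub>l\<close>:
  otherwise \<open>\<alpha>\<^sub>1\<^sub>,\<^sub>n\<close> and \<open>\<alpha>\<^sub>a\<^sub>,\<^sub>n\<close> (\<open>a > 1\<close>) lie above it and sum to \<open>\<beta>\<^sub>1\<^sub>,\<^sub>a\<close>.\<close>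
lemma abelian_non_beta_root:
  assumes ab: "abelian n A" and x: "x \<in> A" "x \<in> posroots n" "x \<notin> betaroots n"
  obtains l where "1 \<le> l" "l \<le> n" "x = alpha 1 l"
  using x(2)
proof (cases rule: posroots_cases)
  case (alpha a b)
  have "a = 1"
  proof (rule ccontr)
    assume "a \<noteq> 1"
    with alpha have a: "1 < a" "a \<le> n" by auto
    have "alpha 1 n \<in> upper n A" "alpha a n \<in> upper n A"
      using alpha x(1) a by (auto intro!: upperI alpha_posroot simp: alpha_rle_iff)
    moreover have "alpha 1 n + alpha a n \<in> roots n" by (rule alpha_1_plus_alpha_root[OF a])
    ultimately show False using ab unfolding abelian_def by blast
  qed
  then show ?thesis using alpha that by blast
next
  case (beta k l)
  then show ?thesis using x(3) unfolding betaroots_def by blast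
qed

text \<open>Two roots \<open>\<alpha>\<^sub>1\<^sub>,\<^sub>l\<close>, \<open>\<alpha>\<^sub>1\<^sub>,\<^sub>l\<^sub>'\<close> are comparable, so an antichain contains at most one.\<close>
lemma antichain_alpha_1_unique:
  assumes anti: "\<forall>a\<in>A. \<forall>b\<in>A. a \<noteq> b \<longrightarrow> \<not> rle a b"
    and l: "alpha 1 l \<in> A" "1 \<le> l" and l': "alpha 1 l' \<in> A" "1 \<le> l'"
  shows "l = l'"
proof -
  have "rle (alpha 1 l) (alpha 1 l') \<or> rle (alpha 1 l') (alpha 1 l)"
    using l(2) l'(2) by (cases "l \<le> l'") (simp_all add: alpha_rle_iff)
  then have "alpha 1 l = alpha 1 l'"
    using anti[rule_format, OF l(1) l'(1)] anti[rule_format, OF l'(1) l(1)] by metis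
  then have "alpha 1 l l = alpha 1 l' l" "alpha 1 l l' = alpha 1 l' l'" by simp_all
  then show ?thesis using l(2) l'(2) by (simp add: alpha_apply split: if_splits)
qed

text \<open>In an abelian antichain containing \<open>\<alpha>\<^sub>1\<^sub>,\<^sub>l\<close>, every \<open>\<beta>\<^sub>k\<^sub>,\<^sub>m\<close> is nested inside
  \<open>[2, l]\<close>: for \<open>k = 1\<close> it would lie above \<open>\<alpha>\<^sub>1\<^sub>,\<^sub>l\<close>, and for \<open>m > l\<close> a root above
  it adds to \<open>\<alpha>\<^sub>1\<^sub>,\<^sub>l\<close> to give a root.\<close>
lemma abelian_antichain_alpha_beta_nested:
  assumes anti: "\<forall>a\<in>A. \<forall>b\<in>A. a \<noteq> b \<longrightarrow> \<not> rle a b" and ab: "abelian n A"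
    and a: "alpha 1 l \<in> A" "1 \<le> l" "l \<le> n"
    and b: "beta n k m \<in> A" "1 \<le> k" "k < m" "m \<le> n"
  shows "1 < k \<and> m \<le> l"
proof -
  have k: "1 < k"
  proof (rule ccontr)
    assume "\<not> 1 < k"
    then have "rle (alpha 1 l) (beta n k m)" using b(2) alpha_1_rle_beta_1[OF a(3)] by simp
    moreover have "alpha 1 l \<noteq> beta n k m" using alpha_ne_beta a(3) b(3,4) by blast
    ultimately show False using anti[rule_format, OF a(1) b(1)] by blast
  qed
  have "m \<le> l"
  proof (rule ccontr)
    assume "\<not> m \<le> l"
    then have lm: "l < m" by simp
    have a_up: "alpha 1 l \<in> upper n A" using a by (auto intro!: upperI alpha_posroot simp: rle_def)
    have sum_root: "\<exists>y\<in>upper n A. alpha 1 l + y \<in> roots n"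
    proof (cases "l = 1")
      case True
      have "beta n 2 m \<in> upper n A"
        using k b lm by (auto intro!: upperI beta_posroot simp: beta_rle_iff)
      then show ?thesis using alpha_1_1_plus_beta_root[of m n] True k b lm by auto
    next
      case False
      have "beta n 2 (Suc l) \<in> upper n A"
        using k b lm a False by (auto intro!: upperI[OF _ b(1)] beta_posroot simp: beta_rle_iff)
      then show ?thesis using alpha_1_plus_beta_root[of l n] False a b lm by auto
    qed
    then show False using a_up ab unfolding abelian_def by blast
  qed
  with k show ?thesis by simp
qed

lemma Aab_non_beta_part:
  assumes A: "A \<in> Aab n s J" and J: "J \<subseteq> {1..n}" and x: "x \<in> A" "x \<notin> betaroots n"
  obtains l where "1 \<le> l" "l \<le> n" "x = alpha 1 l" "1 \<notin> J" "l \<notin> J"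
    "A = insert x (A \<inter> betaroots n)"
proof -
  have JA: "J_antichain n J A" and ab: "abelian n A" using A unfolding Aab_def by auto
  then have sub: "A \<subseteq> posroots n" and anti: "\<forall>a\<in>A. \<forall>b\<in>A. a \<noteq> b \<longrightarrow> \<not> rle a b"
    unfolding J_antichain_def by auto
  obtain l where l: "1 \<le> l" "l \<le> n" "x = alpha 1 l"
    using abelian_non_beta_root[OF ab x(1)] sub x by blast
  have "1 \<notin> J" "l \<notin> J"
    using JA x(1) alpha_1_lowest_iff[OF J l(1,2)] l(3) unfolding J_antichain_def by auto
  moreover have "y = x" if y: "y \<in> A" "y \<notin> betaroots n" for y
  proof -
    obtain l' where l': "1 \<le> l'" "l' \<le> n" "y = alpha 1 l'"
      using abelian_non_beta_root[OF ab y(1) _ y(2)] sub y(1) by blast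
    then have "l' = l" using antichain_alpha_1_unique[OF anti] x(1) y(1) l by blast
    then show ?thesis using l l' by simp
  qed
  then have "A = insert x (A \<inter> betaroots n)" using x(1) by blast
  ultimately show ?thesis using that l by blast
qed

text \<open>Every abelian \<open>J\<close>-antichain is of one of the three types: its \<open>\<beta>\<close>-roots form a
  chain of admissible pairs, and any remaining root is a single \<open>\<alpha>\<^sub>1\<^sub>,\<^sub>l\<close> enclosing
  that chain.\<close>
lemma Aab_subset_classes:
  assumes A: "A \<in> Aab n s J" and J: "J \<subseteq> {1..n}"
  shows "A \<in> A11 n s J \<union> A12 n s J \<union> A2J n s J"
proof -
  have JA: "J_antichain n J A" and ab: "abelian n A" and fin: "finite A" and card: "card A = s"
    using A unfolding Aab_def by auto
  let ?B = "A \<inter> betaroots n"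
  let ?t = "card ?B"
  obtain i j where c: "chain n ?t i j" and B: "bset n ?t i j = ?B"
    and adm: "\<forall>m\<in>{1..?t}. admissible J (i m) (j m)"
    using antichain_betas_chain[OF JA fin J] by blast
  have B_class: "?B \<in> A11 n ?t J \<union> A12 n ?t J"
    using bset_A11_A12_iff[OF c] adm B by simp
  show ?thesis
  proof (cases "A \<subseteq> betaroots n")
    case True
    then have "?B = A" by blast
    then show ?thesis using B_class card by simp
  next
    case False
    then obtain x where x: "x \<in> A" "x \<notin> betaroots n" by blast
    then obtain l where l: "1 \<le> l" "l \<le> n" "x = alpha 1 l" and notJ: "1 \<notin> J" "l \<notin> J"
      and A_eq: "A = insert x ?B"
      using Aab_non_beta_part[OF A J] by blast
    have "card (insert x ?B) = Suc ?t" using fin x(2) by simp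
    then have s: "s = Suc ?t" using A_eq card by simp
    have nest: "1 \<le> ?t \<longrightarrow> 1 < i 1 \<and> j 1 \<le> l"
    proof
      assume "1 \<le> ?t"
      then have "beta n (i 1) (j 1) \<in> A" "1 \<le> i 1" "i 1 < j 1" "j 1 \<le> n"
        using B chain_elem[OF c, of 1] unfolding bset_def by auto
      then show "1 < i 1 \<and> j 1 \<le> l"
        using abelian_antichain_alpha_beta_nested[OF _ ab _ l(1,2)] JA x(1) l(3)
        unfolding J_antichain_def by blast
    qed
    have "A = insert (alpha 1 l) (bset n ?t i j)" using A_eq B l(3) by simp
    then have "\<exists>l' i' j'. A = insert (alpha 1 l') (bset n (s - 1) i' j') \<and> 1 \<le> s
        \<and> 1 \<le> l' \<and> l' \<le> n \<and> chain n (s - 1) i' j' \<and> (1 \<le> s - 1 \<longrightarrow> 1 < i' 1 \<and> j' 1 \<le> l')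
        \<and> l' \<notin> J \<and> bset n (s - 1) i' j' \<in> A11 n (s - 1) J \<union> A12 n (s - 1) J"
      using c nest notJ(2) l B_class B unfolding s
      by (intro exI[of _ l] exI[of _ i] exI[of _ j]) simp
    then have "A \<in> A2J n s J" unfolding A2J_def using notJ(1) by simp
    then show ?thesis by simp
  qed
qed

text \<open>Disjointness: members of \<open>A\<^sup>1\<^sup>,\<^sup>2\<close> have innermost first index in \<open>J\<close>, members of
  \<open>A\<^sup>1\<^sup>,\<^sup>1\<close> have none; members of \<open>A\<^sup>2\<close> contain an \<open>\<alpha>\<^sub>1\<^sub>,\<^sub>l\<close>, those of \<open>A\<^sup>1\<close> only \<open>\<beta>\<close>'s.\<close>
lemma A11_A12_disjoint: "A11 n s J \<inter> A12 n s J = {}"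
proof -
  have False if X: "X \<in> A11 n s J" "X \<in> A12 n s J" for X
  proof -
    obtain i j where w: "X = bset n s i j" "1 \<le> s" "chain n s i j" "i s \<in> J"
      using X(2) unfolding A12_def by blast
    then have "beta n (i s) (j s) \<in> X" unfolding bset_def by auto
    then obtain k l where kl: "1 \<le> k" "k < l" "l \<le> n" "beta n (i s) (j s) = beta n k l" "k \<notin> J"
      using A11_elem[OF X(1)] by blast
    then have "i s = k" using beta_inj chain_elem[OF w(3), of s] w(2) by auto
    then show False using w(4) kl(5) by simp
  qed
  then show ?thesis by blast
qed

lemma A1_A2J_disjoint: "(A11 n s J \<union> A12 n s J) \<inter> A2J n s J = {}"
proof -
  have False if X: "X \<in> A11 n s J \<union> A12 n s J" "X \<in> A2J n s J" for X
  proof -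
    obtain l where "alpha 1 l \<in> X" "l \<le> n" using A2J_cases[OF X(2)] by blast
    then show False using A11_A12_elem[OF X(1)] alpha_ne_beta by blast
  qed
  then show ?thesis by blast
qed

theorem mainTheorem9:
  fixes n s :: nat and J :: "nat set"
  assumes "2 \<le> n" and "J \<subseteq> {1..n}" and "1 \<le> s"
  shows "Aab n s J = A11 n s J \<union> A12 n s J \<union> A2J n s J
     \<and> A11 n s J \<inter> A12 n s J = {}
     \<and> A11 n s J \<inter> A2J n s J = {}
     \<and> A12 n s J \<inter> A2J n s J = {}"
  using Aab_subset_classes[OF _ assms(2)] classes_subset_Aab[OF assms(2)]
    A11_A12_disjoint A1_A2J_disjoint by blast

end
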